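(* Let $G$ be a transitively closed directed acyclic graph on $[n]$ and let $H\subseteq G$ be path consistent and admissible with respect to $G$. Then there exist a partition $\mathcal P$ of $[n]$ and, for each $P\in\mathcal P$, disjoint subsets $L_P,R_P\subseteq P$ such that $E(H)=\bigcup_{P\in\mathcal P}E\big((G|_P)_{L_P,R_P}\big)$.
   Context: Conventions: $G$ is a directed acyclic graph with vertex set $[n]$, every edge $(i,j)\in E(G)$ satisfying $i<j$. A subgraph $H\subseteq G$ means $V(H)=[n]$ and $E(H)\subseteq E(G)$; $H^{un}$ is the underlying undirected graph. $G$ is transitively closed if $(i,j),(j,k)\in E(G)$ implies $(i,k)\in E(G)$. $G|_P$ is the induced subgraph on $P$. For disjoint $L,R$, $G_{L,R}$ is the subgraph with edges $\{(i,j)\in E(G):i\in L,j\in R\}$. Path consistency: for an undirected path $p$ in $H^{un}$ from $u$ to $v$, let $\delta(p)$ be the number of edges traversed (from $u$ to $v$) along their orientation minus the number traversed against it. $H$ is path consistent if any two undirected paths in $H^{un}$ with the same endpoints $u,v$ have equal $\delta$; this common value is $\ell_{uv}$. Within a connected component $C$ of $H^{un}$, a weight source is $u_*\in C$ with $\ell_{u_*v_*}=\max_{u,v\in C}\ell_{uv}$ for some $v_*\in C$. The weight function is $w(i)=\ell_{u_*i}$, $u_*$ any weight source in the component of $i$. $H_{comp}$: directed multigraph whose vertices are the connected components of $H^{un}$, with one edge from the component of $u$ to that of $v$ for each $(u,v)\in E(G)\setminus E(H)$; for such an edge $e$, $\mathsf{wd}(e)=w(u)-w(v)$. $H$ is admissible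 with respect to $G$ if for every directed cycle $\mathcal C$ of $H_{comp}$ (including loops), $\sum_{e\in\mathcal C}\mathsf{wd}(e)>-|\mathcal C|$. *)

theory Defs
  imports Main "HOL-Library.Disjoint_Sets"
begin

definition dag_on :: "nat \<Rightarrow> (nat \<times> nat) set \<Rightarrow> bool" where
  "dag_on n E \<longleftrightarrow> E \<subseteq> {(i,j). 1 \<le> i \<and> i < j \<and> j \<le> n}"

definition trans_closed :: "(nat \<times> nat) set \<Rightarrow> bool" where
  "trans_closed E \<longleftrightarrow> (\<forall>i j k. (i,j) \<in> E \<and> (j,k) \<in> E \<longrightarrow> (i,k) \<in> E)"

definition upath :: "nat \<Rightarrow> (nat \<times> nat) set \<Rightarrow> nat \<Rightarrow> nat \<Rightarrow> nat list \<Rightarrow> bool" where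
  "upath n EH u v p \<longleftrightarrow> p \<noteq> [] \<and> hd p = u \<and> last p = v \<and> distinct p \<and>
     set p \<subseteq> {1..n} \<and>
     (\<forall>i. Suc i < length p \<longrightarrow> (p!i, p!Suc i) \<in> EH \<or> (p!Suc i, p!i) \<in> EH)"

definition delta :: "(nat \<times> nat) set \<Rightarrow> nat list \<Rightarrow> int" where
  "delta EH p = (\<Sum>i<length p - 1. if (p!i, p!Suc i) \<in> EH then 1 else -1)"

definition path_consistent :: "nat \<Rightarrow> (nat \<times> nat) set \<Rightarrow> bool" where
  "path_consistent n EH \<longleftrightarrow>
     (\<forall>u v p q. upath n EH u v p \<and> upath n EH u v q \<longrightarrow> delta EH p = delta EH q)"

definition ell :: "nat \<Rightarrow> (nat \<times> nat) set \<Rightarrow> nat \<Rightarrow> nat \<Rightarrow> int" where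
  "ell n EH u v = (SOME d. \<exists>p. upath n EH u v p \<and> delta EH p = d)"

definition comp :: "nat \<Rightarrow> (nat \<times> nat) set \<Rightarrow> nat \<Rightarrow> nat set" where
  "comp n EH i = {j. \<exists>p. upath n EH i j p}"

definition weight_source :: "nat \<Rightarrow> (nat \<times> nat) set \<Rightarrow> nat set \<Rightarrow> nat \<Rightarrow> bool" where
  "weight_source n EH C s \<longleftrightarrow> s \<in> C \<and>
     (\<exists>t\<in>C. \<forall>u\<in>C. \<forall>v\<in>C. ell n EH u v \<le> ell n EH s t)"

definition weight :: "nat \<Rightarrow> (nat \<times> nat) set \<Rightarrow> nat \<Rightarrow> int" where
  "weight n EH i = ell n EH (SOME s. weight_source n EH (comp n EH i) s) i"

definition wd :: "nat \<Rightarrow> (nat \<times> nat) set \<Rightarrow> nat \<times> nat \<Rightarrow> int" where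
  "wd n EH e = weight n EH (fst e) - weight n EH (snd e)"

text \<open>A directed cycle of H_comp (loops included) is a nonempty list of edges of
  E(G) - E(H) whose consecutive (cyclically) edges are incident in H_comp, i.e.
  the head component of one is the tail component of the next, and whose tail
  components are pairwise distinct.\<close>

definition comp_cycle :: "nat \<Rightarrow> (nat \<times> nat) set \<Rightarrow> (nat \<times> nat) set \<Rightarrow> (nat \<times> nat) list \<Rightarrow> bool" where
  "comp_cycle n EG EH es \<longleftrightarrow> es \<noteq> [] \<and> set es \<subseteq> EG - EH \<and>
     distinct (map (\<lambda>e. comp n EH (fst e)) es) \<and>
     (\<forall>i < length es. comp n EH (snd (es!i)) = comp n EH (fst (es!((Suc i) mod length es))))"

definition admissible :: "nat \<Rightarrow> (nat \<times> nat) set \<Rightarrow> (nat \<times> nat) set \<Rightarrow> bool" where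
  "admissible n EG EH \<longleftrightarrow>
     (\<forall>es. comp_cycle n EG EH es \<longrightarrow> (\<Sum>e\<leftarrow>es. wd n EH e) > - int (length es))"

end

theory Submission
  imports Defs
begin

text \<open>Path consistency makes \<open>ell\<close> a potential on each component: it is additive along walks,
  so \<open>w(j) - w(i) = \<ell>(i,j)\<close> within a component. An edge \<open>(u,x)\<close> of \<open>G\<close> outside \<open>H\<close> with both
  ends in one component is a loop of \<open>H_comp\<close>, so admissibility forces \<open>\<ell>(u,x) \<le> 0\<close>.
  Consequently \<open>H\<close> contains no directed path \<open>u \<rightarrow> v \<rightarrow> x\<close>: by transitivity \<open>(u,x) \<in> E(G)\<close>, and
  \<open>\<ell>(u,x) = 2\<close> contradicts both \<open>(u,x) \<in> E(H)\<close> (which gives \<open>\<ell>(u,x) = 1\<close>) and the loop bound.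
  So every vertex is a pure tail or a pure head of \<open>H\<close>, along any path from \<open>i\<close> to \<open>j\<close>
  \<open>\<delta>\<close> telescopes to \<open>[i is a tail] - [j is a tail]\<close>, and a \<open>G\<close>-edge from a tail to a head inside a component has
  \<open>\<ell> = 1\<close> and therefore lies in \<open>H\<close>. The components, with their tails and heads, give the
  decomposition.\<close>

definition adjacent :: "(nat \<times> nat) set \<Rightarrow> nat \<Rightarrow> nat \<Rightarrow> bool" where
  "adjacent EH x y \<longleftrightarrow> (x,y) \<in> EH \<or> (y,x) \<in> EH"

definition edge_sign :: "(nat \<times> nat) set \<Rightarrow> nat \<Rightarrow> nat \<Rightarrow> int" where
  "edge_sign EH x y = (if (x,y) \<in> EH then 1 else -1)"

lemma adjacent_sym: "adjacent EH x y = adjacent EH y x"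
  unfolding adjacent_def by blast

lemma upath_iff:
  "upath n EH u v p \<longleftrightarrow> p \<noteq> [] \<and> hd p = u \<and> last p = v \<and> distinct p \<and> set p \<subseteq> {1..n} \<and>
     successively (adjacent EH) p"
  unfolding upath_def successively_conv_nth adjacent_def ..

lemma upath_ConsE:
  assumes "upath n EH u v p"
  obtains p' where "p = u # p'" "last (u # p') = v" "successively (adjacent EH) (u # p')"
  using assms unfolding upath_iff by (metis list.collapse)

lemma delta_Nil [simp]: "delta EH [] = 0"
  and delta_singleton [simp]: "delta EH [x] = 0"
  by (simp_all add: delta_def)

lemma delta_Cons_Cons [simp]: "delta EH (x # y # p) = edge_sign EH x y + delta EH (y # p)"
  unfolding delta_def edge_sign_def by (simp add: sum.lessThan_Suc_shift del: sum.lessThan_Suc)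

lemma delta_append: "delta EH (xs @ y # ys) = delta EH (xs @ [y]) + delta EH (y # ys)"
  by (induction xs rule: induct_list012) auto

lemma delta_snoc:
  assumes "p \<noteq> []"
  shows "delta EH (p @ [y]) = delta EH p + edge_sign EH (last p) y"
proof -
  have "delta EH (p @ [y]) = delta EH (butlast p @ last p # [y])"
    using append_butlast_last_id[OF assms] by (metis append.assoc append_Cons append_Nil)
  also have "\<dots> = delta EH (butlast p @ [last p]) + delta EH [last p, y]" by (rule delta_append)
  also have "\<dots> = delta EH p + edge_sign EH (last p) y" using assms by simp
  finally show ?thesis .
qed

lemma upath_append:
  assumes "upath n EH u v (xs @ y # ys)"
  shows "upath n EH u y (xs @ [y])" and "upath n EH y v (y # ys)"
  using assms by (auto simp: upath_iff successively_append_iff hd_append)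

lemma upath_snoc:
  assumes "upath n EH u z p" "y \<notin> set p" "y \<in> {1..n}" "adjacent EH z y"
  shows "upath n EH u y (p @ [y])"
  using assms by (auto simp: upath_iff successively_append_iff hd_append)

lemma upath_rev: "upath n EH u v p \<Longrightarrow> upath n EH v u (rev p)"
  by (auto simp: upath_iff hd_rev last_rev adjacent_sym)

lemma upath_edge:
  "x \<in> {1..n} \<Longrightarrow> y \<in> {1..n} \<Longrightarrow> x \<noteq> y \<Longrightarrow> adjacent EH x y \<Longrightarrow> upath n EH x y [x, y]"
  by (simp add: upath_iff)

lemma dag_on_edge: "dag_on n E \<Longrightarrow> (i,j) \<in> E \<Longrightarrow> 1 \<le> i \<and> i < j \<and> j \<le> n"
  unfolding dag_on_def by blast

lemma ell_eq_delta:
  assumes "path_consistent n EH" "upath n EH u v p"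
  shows "ell n EH u v = delta EH p"
proof -
  have "\<exists>q. upath n EH u v q \<and> delta EH q = ell n EH u v"
    unfolding ell_def by (rule someI_ex) (use assms(2) in blast)
  then show ?thesis using assms unfolding path_consistent_def by metis
qed

lemma comp_self: "i \<in> {1..n} \<Longrightarrow> i \<in> comp n EH i"
  unfolding comp_def upath_def by auto

lemma comp_subset: "comp n EH i \<subseteq> {1..n}"
  unfolding comp_def upath_def by auto

lemma comp_sym: "j \<in> comp n EH i \<Longrightarrow> i \<in> comp n EH j"
  unfolding comp_def using upath_rev by blast

lemma comp_extend_edge:
  assumes dag: "dag_on n EH" and pc: "path_consistent n EH"
    and z: "z \<in> comp n EH s" and adj: "adjacent EH z y"
  shows "y \<in> comp n EH s \<and> ell n EH s y = ell n EH s z + edge_sign EH z y"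
proof -
  obtain q where q: "upath n EH s z q" using z unfolding comp_def by blast
  have y: "y \<in> {1..n}" and zy: "z \<noteq> y" and "\<not> ((z,y) \<in> EH \<and> (y,z) \<in> EH)"
    using adj by (auto simp: adjacent_def dest!: dag_on_edge[OF dag])
  then have sign: "edge_sign EH y z = - edge_sign EH z y"
    using adj by (auto simp: adjacent_def edge_sign_def)
  show ?thesis
  proof (cases "y \<in> set q")
    case False
    have q': "upath n EH s y (q @ [y])" using upath_snoc[OF q False y adj] .
    have "q \<noteq> []" "last q = z" using q by (auto simp: upath_iff)
    then have "delta EH (q @ [y]) = delta EH q + edge_sign EH z y" by (simp add: delta_snoc)
    then show ?thesis
      using q' ell_eq_delta[OF pc q] ell_eq_delta[OF pc q'] unfolding comp_def by auto
  next
    case True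
    then obtain q1 q2 where q12: "q = q1 @ y # q2" by (meson split_list)
    have sy: "upath n EH s y (q1 @ [y])" and yz: "upath n EH y z (y # q2)"
      using upath_append q q12 by metis+
    have "upath n EH y z [y, z]"
      using y zy adj comp_subset[of n EH s] z by (intro upath_edge) (auto simp: adjacent_sym)
    then have "delta EH (y # q2) = delta EH [y, z]"
      using ell_eq_delta[OF pc yz] ell_eq_delta[OF pc] by metis
    then have "delta EH q = delta EH (q1 @ [y]) - edge_sign EH z y"
      using q12 delta_append[of EH q1 y q2] sign by simp
    then show ?thesis
      using sy ell_eq_delta[OF pc q] ell_eq_delta[OF pc sy] unfolding comp_def by auto
  qed
qed

lemma edge_in_comp:
  assumes "dag_on n EH" "(i,j) \<in> EH"
  shows "j \<in> comp n EH i"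
proof -
  have "upath n EH i j [i, j]"
    using assms by (intro upath_edge) (auto simp: adjacent_def dest!: dag_on_edge)
  then show ?thesis unfolding comp_def by blast
qed

text \<open>Path consistency is stated for simple paths only; this is its extension to walks.\<close>

lemma comp_ell_walk:
  assumes dag: "dag_on n EH" and pc: "path_consistent n EH"
  shows "a \<in> comp n EH s \<Longrightarrow> successively (adjacent EH) (a # p) \<Longrightarrow>
    last (a # p) \<in> comp n EH s \<and> ell n EH s (last (a # p)) = ell n EH s a + delta EH (a # p)"
proof (induction p arbitrary: a)
  case (Cons b p)
  then have "b \<in> comp n EH s \<and> ell n EH s b = ell n EH s a + edge_sign EH a b"
    using comp_extend_edge[OF dag pc] by simp
  with Cons show ?case by simp
qed simp

lemma comp_path:
  assumes "dag_on n EH" "path_consistent n EH" "a \<in> comp n EH s" "upath n EH a b p"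
  shows "b \<in> comp n EH s \<and> ell n EH s b = ell n EH s a + delta EH p"
proof -
  obtain p' where "p = a # p'" "last (a # p') = b" "successively (adjacent EH) (a # p')"
    using assms(4) by (rule upath_ConsE)
  then show ?thesis using comp_ell_walk[OF assms(1-3)] by blast
qed

lemma comp_eq:
  assumes "dag_on n EH" "path_consistent n EH" "j \<in> comp n EH i"
  shows "comp n EH j = comp n EH i"
proof -
  have trans: "k \<in> comp n EH i" if "j \<in> comp n EH i" "k \<in> comp n EH j" for i j k
    using that comp_path[OF assms(1,2)] unfolding comp_def by blast
  show ?thesis using trans comp_sym assms(3) by blast
qed

lemma partition_on_comp:
  assumes "dag_on n EH" "path_consistent n EH"
  shows "partition_on {1..n} (comp n EH ` {1..n})"
proof (rule partition_onI)
  show "\<Union> (comp n EH ` {1..n}) = {1..n}" using comp_self comp_subset by blast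
  show "{} \<notin> comp n EH ` {1..n}" using comp_self by blast
  show "disjnt P Q" if "P \<in> comp n EH ` {1..n}" "Q \<in> comp n EH ` {1..n}" "P \<noteq> Q" for P Q
    using that comp_eq[OF assms] unfolding disjnt_def by blast
qed

lemma weight_source_exists:
  assumes "i \<in> {1..n}"
  shows "\<exists>s. weight_source n EH (comp n EH i) s"
proof -
  let ?C = "comp n EH i"
  let ?ells = "(\<lambda>(u,v). ell n EH u v) ` (?C \<times> ?C)"
  have "finite ?C" by (rule finite_subset[OF comp_subset]) simp
  then have fin: "finite ?ells" by simp
  have "?ells \<noteq> {}" using comp_self[OF assms] by blast
  then have "Max ?ells \<in> ?ells" using Max_in[OF fin] by blast
  then obtain s t where st: "s \<in> ?C" "t \<in> ?C" "ell n EH s t = Max ?ells" by auto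
  have "ell n EH u v \<le> ell n EH s t" if "u \<in> ?C" "v \<in> ?C" for u v
  proof -
    have "ell n EH u v \<in> ?ells" by (rule rev_image_eqI[of "(u,v)"]) (use that in auto)
    then show ?thesis using Max_ge[OF fin] st(3) by simp
  qed
  then show ?thesis using st unfolding weight_source_def by blast
qed

lemma weight_eq_add_ell:
  assumes dag: "dag_on n EH" and pc: "path_consistent n EH" and j: "j \<in> comp n EH i"
  shows "weight n EH j = weight n EH i + ell n EH i j"
proof -
  obtain p where p: "upath n EH i j p" using j unfolding comp_def by blast
  have "i \<in> {1..n}" using comp_sym[OF j] comp_subset by blast
  define s where "s = (SOME s. weight_source n EH (comp n EH i) s)"
  have "weight_source n EH (comp n EH i) s"
    unfolding s_def using weight_source_exists[OF \<open>i \<in> {1..n}\<close>] by (rule someI_ex)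
  then have "i \<in> comp n EH s" using comp_sym unfolding weight_source_def by blast
  moreover have "weight n EH k = ell n EH s k" if "k \<in> comp n EH i" for k
    using comp_eq[OF dag pc that] unfolding weight_def s_def by simp
  ultimately show ?thesis
    using comp_path[OF dag pc _ p] ell_eq_delta[OF pc p] comp_self[OF \<open>i \<in> {1..n}\<close>] j by simp
qed

text \<open>The edge \<open>(u,x)\<close> is a loop of \<open>H_comp\<close> of weight \<open>w(u) - w(x) = -\<ell>(u,x)\<close>.\<close>

lemma admissible_loop_ell_nonpos:
  assumes dag: "dag_on n EH" and pc: "path_consistent n EH" and adm: "admissible n EG EH"
    and ux: "(u,x) \<in> EG - EH" and x: "x \<in> comp n EH u"
  shows "ell n EH u x \<le> 0"
proof -
  have "comp_cycle n EG EH [(u,x)]"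
    using ux comp_eq[OF dag pc x] unfolding comp_cycle_def by auto
  then have "weight n EH u - weight n EH x > -1"
    using adm unfolding admissible_def wd_def by fastforce
  then show ?thesis using weight_eq_add_ell[OF dag pc x] by simp
qed

lemma no_directed_path_of_length_two:
  assumes dag: "dag_on n EH" and trans: "trans_closed EG" and sub: "EH \<subseteq> EG"
    and pc: "path_consistent n EH" and adm: "admissible n EG EH"
    and uv: "(u,v) \<in> EH" and vx: "(v,x) \<in> EH"
  shows False
proof -
  have ux: "(u,x) \<in> EG" using trans sub uv vx unfolding trans_closed_def by blast
  have "u \<in> {1..n}" "v \<in> {1..n}" "x \<in> {1..n}" "u < v" "v < x"
    using uv vx by (auto dest!: dag_on_edge[OF dag])
  then have uvx: "upath n EH u x [u, v, x]"
    using uv vx by (auto simp: upath_iff adjacent_def)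
  have ell_ux: "ell n EH u x = 2"
    using ell_eq_delta[OF pc uvx] uv vx by (simp add: edge_sign_def)
  show False
  proof (cases "(u,x) \<in> EH")
    case True
    with \<open>u < v\<close> \<open>v < x\<close> have "upath n EH u x [u, x]"
      using \<open>u \<in> {1..n}\<close> \<open>x \<in> {1..n}\<close> by (auto simp: upath_iff adjacent_def)
    then show False using ell_eq_delta[OF pc] ell_ux True by (simp add: edge_sign_def)
  next
    case False
    have "x \<in> comp n EH u" using uvx unfolding comp_def by blast
    then have "ell n EH u x \<le> 0" using admissible_loop_ell_nonpos[OF dag pc adm] ux False by blast
    then show False using ell_ux by simp
  qed
qed

lemma delta_eq_of_no_directed_path_of_length_two:
  assumes "\<And>u v x. (u,v) \<in> EH \<Longrightarrow> (v,x) \<in> EH \<Longrightarrow> False"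
  shows "successively (adjacent EH) (a # p) \<Longrightarrow>
    delta EH (a # p) = of_bool (\<exists>y. (a,y) \<in> EH) - of_bool (\<exists>y. (last (a # p), y) \<in> EH)"
proof (induction p arbitrary: a)
  case (Cons b p)
  have "edge_sign EH a b = of_bool (\<exists>y. (a,y) \<in> EH) - of_bool (\<exists>y. (b,y) \<in> EH)"
    using Cons.prems assms unfolding adjacent_def edge_sign_def by auto
  with Cons show ?case by simp
qed simp

lemma edge_iff_tail_and_head:
  assumes dag: "dag_on n EH" and trans: "trans_closed EG" and sub: "EH \<subseteq> EG"
    and pc: "path_consistent n EH" and adm: "admissible n EG EH"
    and ij: "(i,j) \<in> EG" and j: "j \<in> comp n EH i"
  shows "(i,j) \<in> EH \<longleftrightarrow> (\<exists>y. (i,y) \<in> EH) \<and> (\<exists>y. (y,j) \<in> EH)"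
proof
  assume tail_head: "(\<exists>y. (i,y) \<in> EH) \<and> (\<exists>y. (y,j) \<in> EH)"
  note no_two_path = no_directed_path_of_length_two[OF dag trans sub pc adm]
  obtain p where p: "upath n EH i j p" using j unfolding comp_def by blast
  then obtain p' where "p = i # p'" "last (i # p') = j" "successively (adjacent EH) (i # p')"
    by (rule upath_ConsE)
  moreover have "\<not> (\<exists>y. (j,y) \<in> EH)" using tail_head no_two_path by blast
  ultimately have "delta EH p = 1"
    using delta_eq_of_no_directed_path_of_length_two[OF no_two_path] tail_head by simp
  then have "ell n EH i j = 1" using ell_eq_delta[OF pc p] by simp
  then show "(i,j) \<in> EH" using admissible_loop_ell_nonpos[OF dag pc adm _ j] ij by fastforce
qed blast

theorem mainTheorem15:
  fixes n :: nat and EG EH :: "(nat \<times> nat) set"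
  assumes "dag_on n EG"
    and "trans_closed EG"
    and "EH \<subseteq> EG"
    and "path_consistent n EH"
    and "admissible n EG EH"
  shows "\<exists>\<P> L R. partition_on {1..n} \<P> \<and>
           (\<forall>P\<in>\<P>. L P \<subseteq> P \<and> R P \<subseteq> P \<and> L P \<inter> R P = {}) \<and>
           EH = (\<Union>P\<in>\<P>. {(i,j). (i,j) \<in> EG \<and> i \<in> P \<and> j \<in> P \<and> i \<in> L P \<and> j \<in> R P})"
proof -
  have dag: "dag_on n EH" using assms(1,3) unfolding dag_on_def by blast
  define \<P> where "\<P> = comp n EH ` {1..n}"
  define L where "L P = {a \<in> P. \<exists>y. (a,y) \<in> EH}" for P :: "nat set"
  define R where "R P = {a \<in> P. \<exists>y. (y,a) \<in> EH}" for P :: "nat set"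
  have "\<forall>P\<in>\<P>. L P \<subseteq> P \<and> R P \<subseteq> P \<and> L P \<inter> R P = {}"
    using no_directed_path_of_length_two[OF dag assms(2-5)] unfolding L_def R_def by blast
  moreover have "EH = (\<Union>P\<in>\<P>. {(i,j). (i,j) \<in> EG \<and> i \<in> P \<and> j \<in> P \<and> i \<in> L P \<and> j \<in> R P})"
    (is "EH = ?U")
  proof (intro equalityI subsetI)
    fix e assume "e \<in> EH"
    moreover obtain i j where "e = (i,j)" by fastforce
    ultimately have ij: "(i,j) \<in> EH" by simp
    then have "i \<in> {1..n}" using dag_on_edge[OF dag ij] by simp
    with ij have "i \<in> comp n EH i" "j \<in> comp n EH i" using edge_in_comp[OF dag] comp_self by auto
    then show "e \<in> ?U" using \<open>e = (i,j)\<close> \<open>i \<in> {1..n}\<close> ij assms(3) unfolding \<P>_def L_def R_def by blast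
  next
    fix e assume "e \<in> ?U"
    then obtain a i j where "e = (i,j)" "(i,j) \<in> EG" "i \<in> comp n EH a" "j \<in> comp n EH a"
      "\<exists>y. (i,y) \<in> EH" "\<exists>y. (y,j) \<in> EH"
      unfolding \<P>_def L_def R_def by blast
    moreover have "j \<in> comp n EH i" using calculation(3,4) comp_eq[OF dag assms(4)] by blast
    ultimately show "e \<in> EH" using edge_iff_tail_and_head[OF dag assms(2-5)] by blast
  qed
  ultimately show ?thesis using partition_on_comp[OF dag assms(4)] unfolding \<P>_def by blast
qed

end
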